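(* Let $c:[0,\infty)\to\mathbb{R}$ be continuous and strictly increasing, and let $\lambda\mapsto\epsilon_\lambda\in(0,1]$ satisfy $\lim_{\lambda\to\infty}\epsilon_\lambda=\epsilon\in(0,1)$. For $\lambda>0$ let $\beta^F_\lambda$ be the optimal solution of $\min_{\beta\ge0}c(\beta)$ subject to $\tilde\alpha(\beta,\lambda)\le\epsilon_\lambda$, and let $\beta^G_\lambda$ be the optimal solution of $\min_{\beta\ge0}c(\beta)$ subject to $UB(\beta,\lambda)\le\epsilon_\lambda$. Then $\beta^G_\lambda\ge\beta^F_\lambda$ for all $\lambda>0$, and there is a finite $\beta^*$ with $\lim_{\lambda\to\infty}\beta^G_\lambda=\lim_{\lambda\to\infty}\beta^F_\lambda=\beta^*$.
   Context: $\phi,\Phi$ are the standard normal density and distribution function. For $\lambda>0$ and real $n\ge 0$, $\bar\alpha(n,\lambda)=\min\Big\{1,\big[\lambda\int_0^\infty t e^{-\lambda t}(1+t)^{n-1}\,dt\big]^{-1}\Big\}$ is the continuous Erlang-C function, and $\tilde\alpha(\beta,\lambda)=\bar\alpha(\lambda+\beta\sqrt\lambda,\lambda)$. For $\lambda>0,\beta\ge 0$ set $n=\lambda+\beta\sqrt{\lambda}$, $\rho=\lambda/n$, $a=\sqrt{-2n(1-\rho+\ln\rho)}$, $\gamma=(n-\lambda)/\sqrt{n}$, and $UB(\beta,\lambda)=\left[\rho+\gamma\left(\frac{\Phi(a)}{\phi(a)}+\frac{2}{3\sqrt{n}}\right)\right]^{-1}$. It is known (Janssen, van Leeuwaarden and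 Zwart) that $\tilde\alpha(\beta,\lambda)\le UB(\beta,\lambda)$ for all $\lambda,\beta>0$, and that $\lim_{\lambda\to\infty}UB(\beta,\lambda)=\alpha_{HW}(\beta):=\big(1+\sqrt{2\pi}\,\beta\,\Phi(\beta)e^{\beta^2/2}\big)^{-1}$ for each $\beta>0$. *)

theory Defs
  imports "HOL-Analysis.Analysis"
begin

definition std_phi :: "real \<Rightarrow> real" where
  "std_phi x = exp (- (x^2) / 2) / sqrt (2 * pi)"

definition std_Phi :: "real \<Rightarrow> real" where
  "std_Phi x = (LBINT t:{..x}. std_phi t)"

definition erlangC :: "real \<Rightarrow> real \<Rightarrow> real" where
  "erlangC n lam = min 1 (inverse (lam * (LBINT t:{0..}. t * exp (- lam * t) * (1 + t) powr (n - 1))))"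

definition alpha_tilde :: "real \<Rightarrow> real \<Rightarrow> real" where
  "alpha_tilde \<beta> lam = erlangC (lam + \<beta> * sqrt lam) lam"

definition UB :: "real \<Rightarrow> real \<Rightarrow> real" where
  "UB \<beta> lam =
    (let n = lam + \<beta> * sqrt lam;
         \<rho> = lam / n;
         a = sqrt (- 2 * n * (1 - \<rho> + ln \<rho>));
         \<gamma> = (n - lam) / sqrt n
     in inverse (\<rho> + \<gamma> * (std_Phi a / std_phi a + 2 / (3 * sqrt n))))"

end

theory Submission
  imports Defs "HOL-Probability.Distributions" "HOL-Probability.Sinc_Integral" "HOL-Real_Asymp.Real_Asymp"
begin

text \<open>For \<open>lam \<le> n\<close> the Erlang integral \<open>lam * \<integral>\<^sub>0\<^sup>\<infinity> t exp (- lam t) (1 + t) powr (n - 1) dt\<close>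
  lies between two closed forms. Substituting \<open>u = lam (1 + t) / n\<close> and then the signed root \<open>w\<close> of
  \<open>2 (u - 1 - ln u)\<close> makes the integrand Gaussian in \<open>w\<close>; elementary bounds on \<open>dw/du\<close> yield
  explicit functions whose derivatives lie below resp. above the integrand. The lower closed form is
  \<open>1 / UB\<close>, so \<open>alpha_tilde \<le> UB\<close>: every \<open>UB\<close>-feasible level is \<open>alpha_tilde\<close>-feasible, whence
  \<open>betaF \<le> betaG\<close>. For \<open>n = lam + b sqrt lam\<close> both closed forms tend to \<open>1 / alpha_HW b\<close>, so
  \<open>alpha_tilde b\<close> and \<open>UB b\<close> tend to the strictly decreasing \<open>alpha_HW b\<close>. If \<open>alpha_HW bs = e\<close>,
  then eventually every \<open>b > bs\<close> is \<open>UB\<close>-feasible and every \<open>b < bs\<close> is \<open>alpha_tilde\<close>-infeasible,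
  which squeezes \<open>betaF \<le> betaG\<close> towards \<open>bs\<close>.\<close>

section \<open>The standard normal distribution\<close>

lemma std_phi_eq_std_normal_density: "std_phi = std_normal_density"
  by (simp add: fun_eq_iff std_phi_def std_normal_density_def)

lemma std_phi_pos: "0 < std_phi x"
  by (simp add: std_phi_def)

lemma continuous_on_std_phi: "continuous_on A std_phi"
  unfolding std_phi_def by (intro continuous_intros) auto

lemma borel_measurable_std_phi[measurable]: "std_phi \<in> borel_measurable borel"
  unfolding std_phi_def by measurable

lemma set_integrable_std_phi: "A \<in> sets borel \<Longrightarrow> set_integrable lborel A std_phi"
proof -
  have "integrable lborel std_phi"
    using integrable_normal_density[of 0 1] by (simp add: std_phi_eq_std_normal_density)
  then show "A \<in> sets borel \<Longrightarrow> ?thesis"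
    unfolding set_integrable_def by (rule integrable_mult_indicator[rotated]) simp
qed

lemma set_integral_std_phi_Ioc: "(LBINT t:{x<..y}. std_phi t) = integral {x..y} std_phi"
proof -
  have "(LBINT t:{x<..y}. std_phi t) = (LBINT t:{x..y}. std_phi t)"
    by (rule set_integral_cong_set)
       (auto intro!: AE_I[where N="{x}"] simp: set_borel_measurable_def emeasure_insert_ne)
  also have "\<dots> = integral {x..y} std_phi"
    by (rule set_borel_integral_eq_integral(2)[OF set_integrable_std_phi]) simp
  finally show ?thesis .
qed

lemma std_Phi_split:
  assumes "x \<le> y"
  shows "std_Phi y = std_Phi x + integral {x..y} std_phi"
proof -
  have "{..y} = {..x} \<union> {x<..y}" using assms by auto
  then have "std_Phi y = (LBINT t:{..x} \<union> {x<..y}. std_phi t)" by (simp add: std_Phi_def)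
  also have "\<dots> = std_Phi x + (LBINT t:{x<..y}. std_phi t)"
    unfolding std_Phi_def by (rule set_integral_Un) (auto intro: set_integrable_std_phi)
  finally show ?thesis by (simp add: set_integral_std_phi_Ioc)
qed

lemma std_Phi_add_tail: "std_Phi x + (LBINT t:{x<..}. std_phi t) = 1"
proof -
  have "std_Phi x + (LBINT t:{x<..}. std_phi t) = (LBINT t:{..x} \<union> {x<..}. std_phi t)"
    unfolding std_Phi_def by (rule set_integral_Un[symmetric]) (auto intro: set_integrable_std_phi)
  also have "{..x} \<union> {x<..} = UNIV" by auto
  finally show ?thesis
    using integral_normal_density[of 0 1]
    by (simp add: set_lebesgue_integral_def std_phi_eq_std_normal_density)
qed

lemma std_Phi_minus: "std_Phi (- x) = 1 - std_Phi x"
proof -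
  have "(LBINT t:{x<..}. std_phi t) = (LBINT t:{..<-x}. std_phi t)"
    unfolding set_lebesgue_integral_def
    by (subst lborel_integral_real_affine[where c="-1" and t=0])
       (auto intro!: Bochner_Integration.integral_cong split: split_indicator simp: std_phi_def)
  also have "\<dots> = std_Phi (-x)"
    unfolding std_Phi_def
    by (rule set_integral_cong_set)
       (auto intro!: AE_I[where N="{-x}"] simp: set_borel_measurable_def emeasure_insert_ne)
  finally show ?thesis using std_Phi_add_tail[of x] by simp
qed

lemma std_Phi_has_real_derivative: "(std_Phi has_real_derivative std_phi x) (at x)"
proof -
  have "((\<lambda>y. std_Phi (x-1) + integral {x-1..y} std_phi) has_real_derivative std_phi x)
      (at x within {x-1..x+1})"
    by (intro derivative_eq_intros integral_has_real_derivative[THEN DERIV_cong]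
        continuous_on_std_phi) auto
  then have "(std_Phi has_real_derivative std_phi x) (at x within {x-1..x+1})"
    by (rule has_field_derivative_transform_within[where d=1]) (auto simp: std_Phi_split)
  then show ?thesis by (simp add: at_within_Icc_at)
qed

lemma isCont_std_Phi: "isCont std_Phi x"
  using std_Phi_has_real_derivative DERIV_isCont by blast

lemma std_Phi_mono: "x \<le> y \<Longrightarrow> std_Phi x \<le> std_Phi y"
  using DERIV_nonneg_imp_nondecreasing std_Phi_has_real_derivative std_phi_pos less_imp_le
  by metis

lemma std_Phi_ge_half: "0 \<le> x \<Longrightarrow> 1/2 \<le> std_Phi x"
  using std_Phi_mono[of "-x" x] std_Phi_minus[of x] by linarith

lemma std_Phi_at_top: "(std_Phi \<longlongrightarrow> 1) at_top"
proof -
  have "((\<lambda>y. LBINT t:{0..y}. std_phi t) \<longlongrightarrow> (LBINT t:{0..}. std_phi t)) at_top"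
    by (intro tendsto_set_lebesgue_integral_at_top set_integrable_std_phi) auto
  moreover have "(LBINT t:{0..}. std_phi t) = (LBINT t:{0<..}. std_phi t)"
    by (rule set_integral_cong_set)
       (auto intro!: AE_I[where N="{0}"] simp: set_borel_measurable_def emeasure_insert_ne)
  ultimately have "((\<lambda>y. std_Phi 0 + integral {0..y} std_phi) \<longlongrightarrow> 1) at_top"
    using std_Phi_add_tail[of 0] set_borel_integral_eq_integral(2)[OF set_integrable_std_phi]
    by (auto intro!: tendsto_eq_intros)
  then show ?thesis
    by (rule Lim_transform_eventually) (auto simp: eventually_at_top_linorder std_Phi_split)
qed

section \<open>The function \<open>u - 1 - ln u\<close> and its signed square root\<close>

definition psi :: "real \<Rightarrow> real" where
  "psi u = u - 1 - ln u"

lemma psi_1 [simp]: "psi 1 = 0"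
  by (simp add: psi_def)

lemma psi_has_real_derivative: "0 < u \<Longrightarrow> (psi has_real_derivative 1 - 1/u) (at u)"
  unfolding psi_def by (auto intro!: derivative_eq_intros)

lemma isCont_psi: "0 < u \<Longrightarrow> isCont psi u"
  using DERIV_isCont psi_has_real_derivative by blast

lemma psi_at_top: "filterlim psi at_top at_top"
  unfolding psi_def by real_asymp

lemma psi_minus_quadratic_has_real_derivative:
  assumes "0 < u"
  shows "((\<lambda>u. psi u - 9/2 * (u-1)^2 / (u+2)^2) has_real_derivative
           (u-1)^3 * (u+8) / (u * (u+2)^3)) (at u)"
  using assms
  by (auto intro!: derivative_eq_intros psi_has_real_derivative simp: field_simps) algebra

lemma psi_ge_quadratic:
  assumes "0 < u"
  shows "9/2 * (u-1)^2 / (u+2)^2 \<le> psi u"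
proof -
  define k where "k u = psi u - 9/2 * (u-1)^2 / (u+2)^2" for u
  have k_deriv: "(k has_real_derivative (x-1)^3 * (x+8) / (x * (x+2)^3)) (at x)" if "0 < x" for x
    unfolding k_def[abs_def] using psi_minus_quadratic_has_real_derivative[OF that] .
  have "k 1 \<le> k u"
  proof (cases "1 \<le> u")
    case True
    show ?thesis
    proof (rule DERIV_nonneg_imp_nondecreasing[OF True])
      fix x :: real assume "1 \<le> x"
      then show "\<exists>y. (k has_real_derivative y) (at x) \<and> 0 \<le> y"
        using k_deriv[of x] by auto
    qed
  next
    case False
    show ?thesis
    proof (rule DERIV_nonpos_imp_nonincreasing[of u 1])
      fix x :: real assume x: "u \<le> x" "x \<le> 1"
      moreover have "(x-1)^3 \<le> 0" using x by simp
      ultimately have "(x-1)^3 * (x+8) / (x * (x+2)^3) \<le> 0"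
        using assms by (intro divide_nonpos_pos mult_nonpos_nonneg) auto
      then show "\<exists>y. (k has_real_derivative y) (at x) \<and> y \<le> 0"
        using x assms k_deriv[of x] by auto
    qed (use False in simp)
  qed
  then show ?thesis by (simp add: k_def)
qed

lemma psi_pos:
  assumes "0 < u" "u \<noteq> 1"
  shows "0 < psi u"
proof -
  have "0 < 9/2 * (u-1)^2 / (u+2)^2" using assms by simp
  with psi_ge_quadratic[OF assms(1)] show ?thesis by linarith
qed

lemma psi_nonneg: "0 < u \<Longrightarrow> 0 \<le> psi u"
  using psi_pos[of u] by (cases "u = 1") auto

lemma psi_le_quadratic:
  assumes "1 \<le> u"
  shows "2 * psi u \<le> (u-1)^2"
proof -
  define k where "k x = (x-1)^2/2 - psi x" for x
  have "k 1 \<le> k u"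
  proof (rule DERIV_nonneg_imp_nondecreasing[OF assms])
    fix x assume x: "1 \<le> x" "x \<le> u"
    have "(k has_real_derivative (x-1)^2 / x) (at x)"
      unfolding k_def psi_def using x
      by (auto intro!: derivative_eq_intros simp: field_simps power2_eq_square)
    then show "\<exists>y. (k has_real_derivative y) (at x) \<and> 0 \<le> y" using x by auto
  qed
  then show ?thesis by (simp add: k_def)
qed

lemma psi_le_quadratic_inverse:
  assumes "0 < u" "u \<le> 1"
  shows "2 * u^2 * psi u \<le> (1-u)^2"
proof -
  define k where "k x = (1/x-1)^2/2 - psi x" for x
  have "k 1 \<le> k u"
  proof (rule DERIV_nonpos_imp_nonincreasing[OF assms(2)])
    fix x assume x: "u \<le> x" "x \<le> 1"
    have "(k has_real_derivative - ((1/x-1)^2 * (1/x+1))) (at x)"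
      unfolding k_def psi_def using x assms
      by (auto intro!: derivative_eq_intros simp: field_simps power2_eq_square)
    moreover have "0 \<le> (1/x-1)^2 * (1/x+1)" using x assms by auto
    ultimately show "\<exists>y. (k has_real_derivative y) (at x) \<and> y \<le> 0" by auto
  qed
  then have "psi u \<le> (1-u)^2 / (2*u^2)"
    using assms by (simp add: k_def field_simps power2_eq_square)
  then show ?thesis using assms by (simp add: field_simps)
qed

text \<open>The signed square root of \<open>2 psi\<close>: substituting \<open>w = psi_root u\<close> turns the factor
  \<open>exp (- n * psi u)\<close> of the Erlang integrand into the Gaussian \<open>exp (- n * w^2 / 2)\<close>.\<close>

definition psi_root :: "real \<Rightarrow> real" where
  "psi_root u = (if 1 \<le> u then sqrt (2 * psi u) else - sqrt (2 * psi u))"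

lemma psi_root_1 [simp]: "psi_root 1 = 0"
  by (simp add: psi_root_def)

lemma psi_root_sq: "0 < u \<Longrightarrow> (psi_root u)^2 = 2 * psi u"
  using psi_nonneg[of u] by (simp add: psi_root_def)

lemma abs_psi_root: "0 < u \<Longrightarrow> \<bar>psi_root u\<bar> = sqrt (2 * psi u)"
  using psi_nonneg[of u] by (simp add: psi_root_def)

lemma psi_root_pos: "1 < u \<Longrightarrow> 0 < psi_root u"
  using psi_pos[of u] by (simp add: psi_root_def)

lemma psi_root_neg: "0 < u \<Longrightarrow> u < 1 \<Longrightarrow> psi_root u < 0"
  using psi_pos[of u] by (simp add: psi_root_def)

lemma psi_root_nonzero: "0 < u \<Longrightarrow> u \<noteq> 1 \<Longrightarrow> psi_root u \<noteq> 0"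
  using psi_root_pos[of u] psi_root_neg[of u] by (cases "u < 1") auto

lemma psi_root_has_real_derivative:
  assumes "0 < u" "u \<noteq> 1"
  shows "(psi_root has_real_derivative (1 - 1/u) / psi_root u) (at u)"
proof -
  have psi_u: "0 < psi u" using psi_pos assms by auto
  define s where "s = (if 1 < u then 1 else - 1 :: real)"
  have deriv: "((\<lambda>x. s * sqrt (2 * psi x)) has_real_derivative
      s * (inverse (sqrt (2 * psi u)) / 2 * (2 * (1 - 1/u)))) (at u)"
    using psi_u assms by (auto intro!: derivative_eq_intros psi_has_real_derivative)
  have eq: "s * (inverse (sqrt (2 * psi u)) / 2 * (2 * (1 - 1/u))) = (1 - 1/u) / psi_root u"
    using assms psi_u by (auto simp: s_def psi_root_def divide_simps)
  have "eventually (\<lambda>x. x \<in> (if 1 < u then {1<..} else {..<1})) (nhds u)"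
    using assms by (intro eventually_nhds_in_open) auto
  then have ev: "eventually (\<lambda>x. s * sqrt (2 * psi x) = psi_root x) (nhds u)"
    by eventually_elim (auto simp: s_def psi_root_def split: if_splits)
  show ?thesis
    using DERIV_cong_ev[OF refl ev eq] deriv by simp
qed

lemma isCont_psi_root:
  assumes "0 < u"
  shows "isCont psi_root u"
proof (cases "u = 1")
  case False
  then show ?thesis using psi_root_has_real_derivative[OF assms False] DERIV_isCont by blast
next
  case True
  have "((\<lambda>x. sqrt (2 * psi x)) \<longlongrightarrow> sqrt (2 * psi 1)) (at 1)"
    using isCont_psi[of 1] by (intro tendsto_intros) (auto simp: isCont_def)
  moreover have "eventually (\<lambda>x. x \<in> {0<..}) (at (1::real))"
    by (rule eventually_at_in_open') auto
  then have "eventually (\<lambda>x. sqrt (2 * psi x) = \<bar>psi_root x\<bar>) (at 1)"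
    by eventually_elim (simp add: abs_psi_root)
  ultimately have "((\<lambda>x. \<bar>psi_root x\<bar>) \<longlongrightarrow> 0) (at 1)"
    by (auto intro: Lim_transform_eventually)
  then show ?thesis using True by (simp add: isCont_def tendsto_rabs_zero_iff)
qed

lemma abs_psi_root_ge:
  assumes "0 < u"
  shows "3 * \<bar>u - 1\<bar> / (u+2) \<le> \<bar>psi_root u\<bar>"
proof (rule power2_le_imp_le)
  have "(3 * \<bar>u - 1\<bar> / (u+2))^2 = 2 * (9/2 * (u-1)^2 / (u+2)^2)"
    by (simp add: power_divide power_mult_distrib)
  also have "\<dots> \<le> \<bar>psi_root u\<bar>^2"
    using psi_ge_quadratic[OF assms] psi_root_sq[OF assms] by simp
  finally show "(3 * \<bar>u - 1\<bar> / (u+2))^2 \<le> \<bar>psi_root u\<bar>^2" .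
qed simp

text \<open>Bounds on the derivative of \<open>psi_root\<close>; the \<open>2/3\<close> is the one in the correction term
  \<open>2 / (3 sqrt n)\<close> of \<open>UB\<close>.\<close>

lemma psi_root_slope_le:
  assumes "0 < u" "u \<noteq> 1"
  shows "(1 - 1/u) / psi_root u + 2/3 * (1 - 1/u) \<le> 1"
proof -
  have lower: "3 * \<bar>u - 1\<bar> / (u+2) \<le> \<bar>psi_root u\<bar>" by (rule abs_psi_root_ge[OF assms(1)])
  have pos: "0 < 3 * \<bar>u - 1\<bar> / (u+2)" using assms by simp
  have "(1 - 1/u) / psi_root u = (u - 1) / (u * psi_root u)"
    using assms psi_root_nonzero[OF assms] by (simp add: field_simps)
  also have "\<dots> \<le> \<bar>u - 1\<bar> / (u * \<bar>psi_root u\<bar>)"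
    using abs_ge_self[of "(u - 1) / (u * psi_root u)"] assms by (simp add: abs_mult)
  also have "\<dots> \<le> \<bar>u - 1\<bar> / (u * (3 * \<bar>u - 1\<bar> / (u+2)))"
    using assms lower pos psi_root_nonzero[OF assms]
    by (intro divide_left_mono mult_left_mono mult_pos_pos) auto
  also have "\<dots> = 1 - 2/3 * (1 - 1/u)"
    using assms by (simp add: field_simps)
  finally show ?thesis by linarith
qed

lemma psi_root_slope_ge_gt1:
  assumes "1 < u"
  shows "1 \<le> (1 - 1/u) / psi_root u + (1 - 1/u)"
proof -
  have root_pos: "0 < psi_root u" using psi_root_pos[OF assms] .
  then have pos: "0 < u * psi_root u" using assms by simp
  have "(psi_root u)^2 \<le> (u-1)^2"
    using psi_root_sq[of u] psi_le_quadratic[of u] assms by simp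
  then have "psi_root u \<le> u - 1" by (rule power2_le_imp_le) (use assms in simp)
  moreover have "(u-1) * (1 + psi_root u) - u * psi_root u = u - 1 - psi_root u" by algebra
  ultimately have "u * psi_root u \<le> (u-1) * (1 + psi_root u)" by linarith
  moreover have "(1 - 1/u) / psi_root u + (1 - 1/u) = (u-1) * (1 + psi_root u) / (u * psi_root u)"
    using root_pos assms by (simp add: field_simps)
  ultimately show ?thesis using pos by simp
qed

lemma psi_root_slope_ge_lt1:
  assumes "0 < u" "u < 1"
  shows "1 \<le> (1 - 1/u) / psi_root u"
proof -
  have root_neg: "psi_root u < 0" using psi_root_neg[OF assms] .
  then have pos: "0 < u * - psi_root u" using assms by (simp add: mult_pos_neg)
  have "(u * - psi_root u)^2 \<le> (1-u)^2"
    using psi_root_sq[of u] psi_le_quadratic_inverse[of u] assms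
    by (simp add: power_mult_distrib)
  then have le: "u * - psi_root u \<le> 1 - u" by (rule power2_le_imp_le) (use assms in simp)
  have eq: "(1 - 1/u) / psi_root u = (1 - u) / (u * - psi_root u)"
    using root_neg assms by (simp add: field_simps)
  show ?thesis unfolding eq le_divide_eq_1_pos[OF pos] using le .
qed

lemma psi_root_at_top: "filterlim psi_root at_top at_top"
proof -
  have lim: "filterlim (\<lambda>u. sqrt (2 * psi u)) at_top at_top"
    by (intro filterlim_compose[OF sqrt_at_top] filterlim_tendsto_pos_mult_at_top[OF tendsto_const _ psi_at_top]) simp
  have "eventually (\<lambda>u. sqrt (2 * psi u) = psi_root u) at_top"
    by (auto simp: psi_root_def eventually_at_top_linorder intro!: exI[of _ 1])
  from filterlim_cong[OF refl refl this] lim show ?thesis by simp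
qed

section \<open>Comparison of an integral with an antiderivative\<close>

lemma DERIV_nonneg_except_point_imp_increasing:
  fixes f :: "real \<Rightarrow> real"
  assumes "a \<le> b" "continuous_on {a..b} f"
    and "\<And>x. a < x \<Longrightarrow> x < b \<Longrightarrow> x \<noteq> c \<Longrightarrow> \<exists>y. (f has_real_derivative y) (at x) \<and> 0 \<le> y"
  shows "f a \<le> f b"
proof (cases "a < c \<and> c < b")
  case True
  have "f a \<le> f c"
    by (rule DERIV_nonneg_imp_increasing_open)
       (use True assms in \<open>auto intro: continuous_on_subset\<close>)
  also have "f c \<le> f b"
    by (rule DERIV_nonneg_imp_increasing_open)
       (use True assms in \<open>auto intro: continuous_on_subset\<close>)
  finally show ?thesis .
next
  case False
  show ?thesis
    by (rule DERIV_nonneg_imp_increasing_open) (use False assms in auto)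
qed

lemma antiderivative_le_integral:
  fixes f g :: "real \<Rightarrow> real"
  assumes "continuous_on {a..} g" "continuous_on {a..} f"
    and "\<And>t. a < t \<Longrightarrow> t \<noteq> c \<Longrightarrow> \<exists>d. (f has_real_derivative d) (at t) \<and> d \<le> g t"
    and "a \<le> b"
  shows "f b - f a \<le> integral {a..b} g"
proof -
  have deriv: "((\<lambda>s. integral {a..s} g) has_real_derivative g x) (at x within {a..b})"
    if "x \<in> {a..b}" for x
    using that assms(1,4)
    by (intro integral_has_real_derivative) (auto intro: continuous_on_subset)
  define h where "h s = integral {a..s} g - f s" for s
  have "h a \<le> h b"
  proof (rule DERIV_nonneg_except_point_imp_increasing[where f=h and a=a and b=b and c=c])
    have "continuous (at x within {a..b}) (\<lambda>s. integral {a..s} g)" if "x \<in> {a..b}" for x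
      using deriv[OF that] by (rule DERIV_continuous)
    then have "continuous_on {a..b} (\<lambda>s. integral {a..s} g)"
      by (simp add: continuous_on_eq_continuous_within)
    then show "continuous_on {a..b} h"
      unfolding h_def using continuous_on_subset[OF assms(2)] by (intro continuous_intros) auto
    fix x assume x: "a < x" "x < b" "x \<noteq> c"
    obtain d where d: "(f has_real_derivative d) (at x)" "d \<le> g x" using assms(3) x by blast
    have "(h has_real_derivative g x - d) (at x)"
      unfolding h_def using deriv[of x] x by (intro DERIV_diff d(1)) (simp add: at_within_Icc_at)
    then show "\<exists>y. (h has_real_derivative y) (at x) \<and> 0 \<le> y" using d(2) by auto
  qed fact
  then show ?thesis by (simp add: h_def)
qed

lemma set_integral_ge_by_antiderivative:
  fixes f g :: "real \<Rightarrow> real"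
  assumes "continuous_on {a..} g" "set_integrable lborel {a..} g" "continuous_on {a..} f"
    and "\<And>t. a < t \<Longrightarrow> t \<noteq> c \<Longrightarrow> \<exists>d. (f has_real_derivative d) (at t) \<and> d \<le> g t"
    and "(f \<longlongrightarrow> L) at_top"
  shows "L - f a \<le> (LBINT t:{a..}. g t)"
proof -
  have integral: "((\<lambda>b. LBINT t:{a..b}. g t) \<longlongrightarrow> (LBINT t:{a..}. g t)) at_top"
    by (intro tendsto_set_lebesgue_integral_at_top assms(2)) auto
  have antiderivative: "((\<lambda>b. f b - f a) \<longlongrightarrow> L - f a) at_top"
    by (intro tendsto_intros assms(5))
  have bound: "eventually (\<lambda>b. f b - f a \<le> (LBINT t:{a..b}. g t)) at_top"
  proof (rule eventually_mono[OF eventually_ge_at_top[of a]])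
    fix b assume "a \<le> b"
    moreover have "(LBINT t:{a..b}. g t) = integral {a..b} g"
      using assms(1) by (intro set_borel_integral_eq_integral(2) borel_integrable_atLeastAtMost')
        (auto intro: continuous_on_subset)
    ultimately show "f b - f a \<le> (LBINT t:{a..b}. g t)"
      using antiderivative_le_integral[OF assms(1,3,4)] by simp
  qed
  show ?thesis by (rule tendsto_le[OF _ integral antiderivative bound]) simp
qed

lemma set_integral_le_by_antiderivative:
  fixes f g :: "real \<Rightarrow> real"
  assumes "continuous_on {a..} g" "set_integrable lborel {a..} g" "continuous_on {a..} f"
    and "\<And>t. a < t \<Longrightarrow> t \<noteq> c \<Longrightarrow> \<exists>d. (f has_real_derivative d) (at t) \<and> g t \<le> d"
    and "(f \<longlongrightarrow> L) at_top"
  shows "(LBINT t:{a..}. g t) \<le> L - f a"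
proof -
  have "- L - - f a \<le> (LBINT t:{a..}. - g t)"
  proof (rule set_integral_ge_by_antiderivative[where c=c])
    fix t assume "a < t" "t \<noteq> c"
    then obtain d where "(f has_real_derivative d) (at t)" "g t \<le> d" using assms(4) by blast
    then show "\<exists>d. ((\<lambda>t. - f t) has_real_derivative d) (at t) \<and> d \<le> - g t"
      by (intro exI[of _ "- d"]) (auto intro!: derivative_eq_intros)
  next
    show "continuous_on {a..} (\<lambda>t. - g t)" "continuous_on {a..} (\<lambda>t. - f t)"
      using assms(1,3) by (auto intro: continuous_on_minus)
    show "set_integrable lborel {a..} (\<lambda>t. - g t)"
      using integrable_minus[OF assms(2)[unfolded set_integrable_def]]
      by (simp add: set_integrable_def)
    show "((\<lambda>t. - f t) \<longlongrightarrow> - L) at_top"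
      using assms(5) by (rule tendsto_minus)
  qed
  then show ?thesis using set_integral_uminus[OF assms(2)] by simp
qed

section \<open>Bounds on the Erlang integral\<close>

definition erlang_integrand :: "real \<Rightarrow> real \<Rightarrow> real \<Rightarrow> real" where
  "erlang_integrand n lam t = t * exp (- lam * t) * (1 + t) powr (n - 1)"

lemma alpha_tilde_eq:
  "alpha_tilde b lam =
     min 1 (inverse (lam * (LBINT t:{0..}. erlang_integrand (lam + b * sqrt lam) lam t)))"
  by (simp add: alpha_tilde_def erlangC_def erlang_integrand_def)

lemma borel_measurable_erlang_integrand[measurable]:
  "erlang_integrand n lam \<in> borel_measurable borel"
  unfolding erlang_integrand_def by measurable

lemma continuous_on_erlang_integrand: "continuous_on {0..} (erlang_integrand n lam)"
  unfolding erlang_integrand_def by (intro continuous_intros) auto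

lemma erlang_integrand_nonneg: "0 \<le> t \<Longrightarrow> 0 \<le> erlang_integrand n lam t"
  unfolding erlang_integrand_def by simp

lemma erlang_integrand_mono:
  "0 \<le> t \<Longrightarrow> n \<le> m \<Longrightarrow> erlang_integrand n lam t \<le> erlang_integrand m lam t"
  unfolding erlang_integrand_def by (intro mult_left_mono powr_mono) auto

text \<open>From \<open>ln x \<le> x - 1\<close> at \<open>x = lam * (1 + t) / (2 * n)\<close>.\<close>

lemma erlang_integrand_le_exp:
  assumes "0 < lam" "0 < n" "0 \<le> t"
  shows "erlang_integrand n lam t \<le> exp (n * ln (2*n/lam) + lam/2 - n) * exp (- (t * (lam/2)))"
proof -
  have "t * (1+t) powr (n-1) \<le> (1+t) * (1+t) powr (n-1)"
    using assms by (intro mult_right_mono) auto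
  also have "\<dots> = exp (n * ln (1+t))"
    using assms powr_add[of "1+t" 1 "n-1"] by (simp add: powr_def)
  also have "\<dots> \<le> exp (n * ln (2*n/lam) + lam*(1+t)/2 - n)"
  proof -
    have "ln ((1+t) * lam / (2*n)) \<le> (1+t) * lam / (2*n) - 1"
      using assms by (intro ln_le_minus_one) simp
    then have "ln (1+t) \<le> ln (2*n/lam) + (1+t) * lam / (2*n) - 1"
      using assms by (simp add: ln_div ln_mult)
    then have "n * ln (1+t) \<le> n * (ln (2*n/lam) + (1+t) * lam / (2*n) - 1)"
      using assms by (intro mult_left_mono) auto
    also have "\<dots> = n * ln (2*n/lam) + lam*(1+t)/2 - n"
      using assms by (simp add: field_simps)
    finally show ?thesis by simp
  qed
  finally have "t * (1+t) powr (n-1) \<le> exp (n * ln (2*n/lam) + lam*(1+t)/2 - n)" .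
  then have "erlang_integrand n lam t \<le> exp (- lam * t) * exp (n * ln (2*n/lam) + lam*(1+t)/2 - n)"
    unfolding erlang_integrand_def by (simp add: mult_left_mono mult_ac)
  also have "\<dots> = exp (n * ln (2*n/lam) + lam/2 - n) * exp (- (t * (lam/2)))"
    unfolding exp_add[symmetric] by (rule arg_cong[where f=exp]) (simp add: field_simps)
  finally show ?thesis .
qed

lemma set_integrable_erlang_integrand:
  assumes "0 < lam" "0 < n"
  shows "set_integrable lborel {0..} (erlang_integrand n lam)"
proof -
  define M where "M = exp (n * ln (2*n/lam) + lam/2 - n)"
  have "set_integrable lborel {0<..} (\<lambda>t. exp (- (t * (lam/2))))"
    by (rule integrable_I0i_exp_mscale) (use assms in simp)
  then have "set_integrable lborel {0..} (\<lambda>t. exp (- (t * (lam/2))))"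
    by (subst set_integrable_discrete_difference[where X="{0}"]) auto
  then have "set_integrable lborel {0..} (\<lambda>t. M * exp (- (t * (lam/2))))"
    by (rule set_integrable_mult_right)
  then show ?thesis
  proof (rule set_integrable_bound)
    show "AE t in lborel. t \<in> {0..} \<longrightarrow>
        norm (erlang_integrand n lam t) \<le> norm (M * exp (- (t * (lam/2))))"
      using erlang_integrand_le_exp[OF assms] erlang_integrand_nonneg by (simp add: M_def)
  qed (simp add: set_borel_measurable_def)
qed

text \<open>With \<open>rho = lam / n\<close> and \<open>u t = rho * (1 + t)\<close> one has \<open>E t = exp (- lam * t) * (1 + t) powr n\<close>
  and \<open>lam * erlang_integrand n lam t = n * rho * E t * (1 - rho / u t)\<close>, while \<open>std_phi (sqrt n * psi_root (u t)) = X t / sqrt (2 * pi)\<close>.\<close>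

locale erlang_bounds =
  fixes lam n :: real
  assumes lam_pos: "0 < lam" and lam_le_n: "lam \<le> n"
begin

definition "rho = lam / n"
definition "K = n * psi rho"
definition "u t = rho * (1 + t)"
definition "X t = exp (- n * psi (u t))"
definition "E t = exp K * X t"
definition "P t = std_Phi (sqrt n * psi_root (u t))"
definition "Y t = exp (- n * psi (max (u t) 1))"
definition "C = (1 - rho) * sqrt n * exp K"
definition "F_lower t = - rho * E t + C * sqrt (2 * pi) * P t - 2 * C / (3 * sqrt n) * X t"
definition "F_upper t = - rho * E t + C * sqrt (2 * pi) * P t + C / sqrt n * (1 - Y t)"

lemma n_pos: "0 < n"
  using lam_pos lam_le_n by simp

lemma rho_pos: "0 < rho"
  using lam_pos n_pos by (simp add: rho_def)

lemma rho_le_1: "rho \<le> 1"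
  using lam_le_n n_pos by (simp add: rho_def)

lemma n_rho: "n * rho = lam"
  using n_pos by (simp add: rho_def)

lemma K_nonneg: "0 \<le> K"
  using psi_nonneg[OF rho_pos] n_pos by (simp add: K_def)

lemma u_pos: "-1 < t \<Longrightarrow> 0 < u t"
  using rho_pos by (simp add: u_def)

lemma E_eq:
  assumes "-1 < t"
  shows "E t = exp (- lam * t) * (1 + t) powr n"
proof -
  have "ln (u t) = ln rho + ln (1 + t)"
    using rho_pos assms by (simp add: u_def ln_mult)
  then have "K - n * psi (u t) = - (n * rho) * t + n * ln (1 + t)"
    by (simp add: K_def psi_def u_def algebra_simps)
  then show ?thesis
    using assms by (simp add: E_def X_def n_rho exp_add[symmetric] powr_def)
qed

lemma lam_erlang_integrand_eq:
  assumes "0 \<le> t"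
  shows "lam * erlang_integrand n lam t = n * rho * E t * ((1 - rho) + rho * (1 - 1 / u t))"
proof -
  have "(1 + t) powr (n - 1) = (1 + t) powr n / (1 + t)"
    using assms by (simp add: powr_diff)
  moreover have "(1 - rho) + rho * (1 - 1 / u t) = t / (1 + t)"
    using assms rho_pos u_pos[of t] by (simp add: u_def field_simps)
  ultimately show ?thesis
    using assms by (simp add: E_eq erlang_integrand_def n_rho)
qed

lemma std_phi_psi_root: "-1 < t \<Longrightarrow> std_phi (sqrt n * psi_root (u t)) = X t / sqrt (2 * pi)"
  using psi_root_sq[OF u_pos] n_pos by (simp add: std_phi_def X_def power_mult_distrib)

lemma u_has_real_derivative: "(u has_real_derivative rho) (at t)"
  unfolding u_def[abs_def] by (auto intro!: derivative_eq_intros)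

lemma psi_u_has_real_derivative:
  "-1 < t \<Longrightarrow> ((\<lambda>t. psi (u t)) has_real_derivative (1 - 1 / u t) * rho) (at t)"
  by (rule DERIV_chain2[OF psi_has_real_derivative u_has_real_derivative]) (rule u_pos)

lemma X_has_real_derivative:
  "-1 < t \<Longrightarrow> (X has_real_derivative - n * rho * (1 - 1 / u t) * X t) (at t)"
  unfolding X_def[abs_def]
  by (auto intro!: derivative_eq_intros psi_u_has_real_derivative)

lemma E_has_real_derivative:
  "-1 < t \<Longrightarrow> (E has_real_derivative - n * rho * (1 - 1 / u t) * E t) (at t)"
  unfolding E_def[abs_def] by (auto intro!: derivative_eq_intros X_has_real_derivative)

lemma P_has_real_derivative:
  assumes "-1 < t" "u t \<noteq> 1"
  shows "(P has_real_derivative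
           sqrt n * rho * ((1 - 1 / u t) / psi_root (u t)) * X t / sqrt (2 * pi)) (at t)"
proof -
  have "((\<lambda>t. psi_root (u t)) has_real_derivative (1 - 1 / u t) / psi_root (u t) * rho) (at t)"
    using assms u_pos[OF assms(1)]
    by (intro DERIV_chain2[OF psi_root_has_real_derivative u_has_real_derivative])
  from DERIV_chain2[OF std_Phi_has_real_derivative DERIV_cmult[OF this, of "sqrt n"]]
  show ?thesis
    using std_phi_psi_root[OF assms(1)] by (simp add: P_def[abs_def] mult_ac)
qed

lemma Y_has_real_derivative_gt1:
  assumes "1 < u t"
  shows "(Y has_real_derivative - n * rho * (1 - 1 / u t) * X t) (at t)"
proof -
  have "0 < rho * (1 + t)" using assms by (simp add: u_def)
  then have t: "-1 < t" using rho_pos by (simp add: zero_less_mult_iff)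
  have "open {s. 1 < u s}"
    unfolding u_def by (intro open_Collect_less continuous_intros)
  then show ?thesis
    by (rule has_field_derivative_transform_within_open[OF X_has_real_derivative[OF t]])
       (use assms in \<open>auto simp: X_def Y_def\<close>)
qed

lemma Y_has_real_derivative_lt1:
  assumes "u t < 1"
  shows "(Y has_real_derivative 0) (at t)"
proof -
  have "open {s. u s < 1}"
    unfolding u_def by (intro open_Collect_less continuous_intros)
  then show ?thesis
    by (rule has_field_derivative_transform_within_open[OF DERIV_const[of 1]])
       (use assms in \<open>auto simp: Y_def\<close>)
qed

lemma sqrt_n_mult: "sqrt n * (sqrt n * x) = n * x"
  using n_pos by (simp flip: mult.assoc)

lemma E_pos: "0 < E t"
  by (simp add: E_def X_def)

lemma F_lower_deriv_le:
  assumes t: "0 < t" "u t \<noteq> 1"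
  shows "\<exists>d. (F_lower has_real_derivative d) (at t) \<and> d \<le> lam * erlang_integrand n lam t"
proof -
  define v where "v = 1 - 1 / u t"
  define q where "q = v / psi_root (u t)"
  have t1: "-1 < t" using t by simp
  have "(F_lower has_real_derivative n * rho * E t * (rho * v + (1 - rho) * (q + 2/3 * v))) (at t)"
    unfolding F_lower_def[abs_def]
    by (rule derivative_eq_intros E_has_real_derivative[OF t1] X_has_real_derivative[OF t1]
          P_has_real_derivative[OF t1 t(2)] | simp)+
       (use n_pos u_pos[OF t1] psi_root_nonzero[OF u_pos[OF t1] t(2)] in
         \<open>simp add: C_def E_def v_def q_def field_simps sqrt_n_mult\<close>)
  moreover have "q + 2/3 * v \<le> 1"
    using psi_root_slope_le[OF u_pos[OF t1] t(2)] by (simp add: q_def v_def)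
  then have "rho * v + (1 - rho) * (q + 2/3 * v) \<le> (1 - rho) + rho * v"
    using mult_left_mono[of _ _ "1 - rho"] rho_le_1 by fastforce
  then have "n * rho * E t * (rho * v + (1 - rho) * (q + 2/3 * v)) \<le> lam * erlang_integrand n lam t"
    using lam_erlang_integrand_eq[of t] t n_pos rho_pos E_pos[of t]
    by (simp add: v_def mult_left_mono)
  ultimately show ?thesis by blast
qed

lemma F_upper_deriv_ge:
  assumes t: "0 < t" "u t \<noteq> 1"
  shows "\<exists>d. (F_upper has_real_derivative d) (at t) \<and> lam * erlang_integrand n lam t \<le> d"
proof -
  define v where "v = 1 - 1 / u t"
  define q where "q = v / psi_root (u t)"
  define w where "w = (if 1 < u t then v else 0)"
  have t1: "-1 < t" using t by simp
  have Y: "(Y has_real_derivative - n * rho * w * X t) (at t)"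
    using Y_has_real_derivative_gt1[of t] Y_has_real_derivative_lt1[of t] t(2)
    by (cases "1 < u t") (auto simp: w_def v_def)
  have "(F_upper has_real_derivative n * rho * E t * (rho * v + (1 - rho) * (q + w))) (at t)"
    unfolding F_upper_def[abs_def]
    by (rule derivative_eq_intros E_has_real_derivative[OF t1] Y
          P_has_real_derivative[OF t1 t(2)] | simp)+
       (use n_pos u_pos[OF t1] psi_root_nonzero[OF u_pos[OF t1] t(2)] in
         \<open>simp add: C_def E_def v_def q_def field_simps sqrt_n_mult\<close>)
  moreover have "1 \<le> q + w"
    using psi_root_slope_ge_gt1[of "u t"] psi_root_slope_ge_lt1[OF u_pos[OF t1]] t(2)
    by (cases "1 < u t") (auto simp: q_def v_def w_def)
  then have "(1 - rho) + rho * v \<le> rho * v + (1 - rho) * (q + w)"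
    using mult_left_mono[of _ _ "1 - rho"] rho_le_1 by fastforce
  then have "lam * erlang_integrand n lam t \<le> n * rho * E t * (rho * v + (1 - rho) * (q + w))"
    using lam_erlang_integrand_eq[of t] t n_pos rho_pos E_pos[of t]
    by (simp add: v_def mult_left_mono)
  ultimately show ?thesis by blast
qed

lemma continuous_on_F_lower: "continuous_on {0..} F_lower"
  and continuous_on_F_upper: "continuous_on {0..} F_upper"
proof -
  have "isCont X t" "isCont E t" "isCont P t" if "-1 < t" for t
  proof -
    show "isCont X t" "isCont E t"
      using X_has_real_derivative[OF that] E_has_real_derivative[OF that] by (auto dest: DERIV_isCont)
    have "isCont (\<lambda>t. psi_root (u t)) t"
      using u_has_real_derivative isCont_psi_root[OF u_pos[OF that]]
      by (auto intro: isCont_o2 DERIV_isCont)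
    then show "isCont P t"
      unfolding P_def[abs_def] by (intro continuous_intros isCont_o2[OF _ isCont_std_Phi])
  qed
  moreover have "isCont Y t" for t
    using u_has_real_derivative[THEN DERIV_isCont]
    unfolding Y_def[abs_def] by (intro continuous_intros isCont_o2[OF _ isCont_psi]) auto
  ultimately show "continuous_on {0..} F_lower" "continuous_on {0..} F_upper"
    unfolding F_lower_def[abs_def] F_upper_def[abs_def] using n_pos
    by (auto intro!: continuous_at_imp_continuous_on continuous_intros)
qed

lemma u_at_top: "filterlim u at_top at_top"
proof -
  have "filterlim (\<lambda>t::real. 1 + t) at_top at_top" by real_asymp
  then show ?thesis
    unfolding u_def[abs_def] by (rule filterlim_tendsto_pos_mult_at_top[OF tendsto_const rho_pos])
qed

lemma X_at_top: "(X \<longlongrightarrow> 0) at_top"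
proof -
  have "filterlim (\<lambda>t. n * psi (u t)) at_top at_top"
    using n_pos by (intro filterlim_tendsto_pos_mult_at_top[OF tendsto_const]
        filterlim_compose[OF psi_at_top u_at_top])
  then show ?thesis
    unfolding X_def[abs_def]
    by (auto intro: filterlim_compose[OF exp_at_bot] filterlim_compose[OF filterlim_uminus_at_bot_at_top])
qed

lemma P_at_top: "(P \<longlongrightarrow> 1) at_top"
proof -
  have "filterlim (\<lambda>t. sqrt n * psi_root (u t)) at_top at_top"
    using n_pos by (intro filterlim_tendsto_pos_mult_at_top[OF tendsto_const]
        filterlim_compose[OF psi_root_at_top u_at_top]) auto
  then show ?thesis
    unfolding P_def[abs_def] by (rule filterlim_compose[OF std_Phi_at_top])
qed

lemma Y_at_top: "(Y \<longlongrightarrow> 0) at_top"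
proof -
  have "eventually (\<lambda>t. 1 \<le> u t) at_top"
    using u_at_top by (simp add: filterlim_at_top)
  then have "eventually (\<lambda>t. X t = Y t) at_top"
    by eventually_elim (simp add: X_def Y_def)
  then show ?thesis using X_at_top by (rule Lim_transform_eventually[rotated])
qed

lemma F_lower_at_top: "(F_lower \<longlongrightarrow> C * sqrt (2 * pi)) at_top"
  and F_upper_at_top: "(F_upper \<longlongrightarrow> C * sqrt (2 * pi) + C / sqrt n) at_top"
  unfolding F_lower_def[abs_def] F_upper_def[abs_def] E_def[abs_def] using n_pos
  by (auto intro!: tendsto_eq_intros X_at_top P_at_top Y_at_top)

lemma P_0: "P 0 = 1 - std_Phi (sqrt (2 * K))"
proof -
  have "psi_root rho = - sqrt (2 * psi rho)"
    using rho_le_1 by (cases "rho = 1") (auto simp: psi_root_def)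
  then have "sqrt n * psi_root (u 0) = - sqrt (2 * K)"
    using n_pos by (simp add: u_def K_def real_sqrt_mult mult_ac)
  then show ?thesis by (simp add: P_def std_Phi_minus)
qed

lemma F_lower_0: "F_lower 0 = - rho + C * sqrt (2 * pi) * (1 - std_Phi (sqrt (2 * K))) - 2/3 * (1 - rho)"
  using n_pos by (simp add: F_lower_def E_def X_def P_0 C_def u_def K_def exp_minus field_simps)

lemma F_upper_0: "F_upper 0 = - rho + C * sqrt (2 * pi) * (1 - std_Phi (sqrt (2 * K)))"
  using rho_le_1 by (simp add: F_upper_def E_def X_def Y_def P_0 u_def K_def exp_minus max_def)

definition "lower_bound = rho + C * sqrt (2 * pi) * std_Phi (sqrt (2 * K)) + (1 - rho) * (2/3)"
definition "upper_bound = rho + C * sqrt (2 * pi) * std_Phi (sqrt (2 * K)) + (1 - rho) * exp K"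

lemma C_nonneg: "0 \<le> C"
  using rho_le_1 n_pos by (simp add: C_def)

lemma C_div_sqrt_n: "C / sqrt n = (1 - rho) * exp K"
  using n_pos by (simp add: C_def)

lemma u_eq_1_iff: "u t = 1 \<longleftrightarrow> t = 1 / rho - 1"
  using rho_pos by (auto simp: u_def field_simps)

lemma lower_bound_le_integral:
  "lower_bound \<le> lam * (LBINT t:{0..}. erlang_integrand n lam t)"
proof -
  have "C * sqrt (2 * pi) - F_lower 0 \<le> (LBINT t:{0..}. lam * erlang_integrand n lam t)"
    using F_lower_deriv_le u_eq_1_iff lam_pos
    by (intro set_integral_ge_by_antiderivative[where c="1 / rho - 1"] continuous_on_F_lower
        F_lower_at_top set_integrable_mult_right set_integrable_erlang_integrand n_pos
        continuous_intros continuous_on_erlang_integrand) auto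
  then show ?thesis
    by (simp add: F_lower_0 lower_bound_def algebra_simps)
qed

lemma integral_le_upper_bound:
  "lam * (LBINT t:{0..}. erlang_integrand n lam t) \<le> upper_bound"
proof -
  have "(LBINT t:{0..}. lam * erlang_integrand n lam t) \<le> C * sqrt (2 * pi) + C / sqrt n - F_upper 0"
    using F_upper_deriv_ge u_eq_1_iff lam_pos
    by (intro set_integral_le_by_antiderivative[where c="1 / rho - 1"] continuous_on_F_upper
        F_upper_at_top set_integrable_mult_right set_integrable_erlang_integrand n_pos
        continuous_intros continuous_on_erlang_integrand) auto
  then show ?thesis
    using n_pos by (simp add: F_upper_0 upper_bound_def C_div_sqrt_n algebra_simps)
qed

lemma lower_bound_pos: "0 < lower_bound"
proof -
  have "0 \<le> std_Phi (sqrt (2 * K))"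
    using std_Phi_ge_half[of "sqrt (2 * K)"] K_nonneg by simp
  with C_nonneg have "0 \<le> C * sqrt (2 * pi) * std_Phi (sqrt (2 * K))" by simp
  moreover have "0 \<le> (1 - rho) * (2/3)" using rho_le_1 by simp
  ultimately show ?thesis using rho_pos unfolding lower_bound_def by linarith
qed

end

section \<open>Square-root staffing\<close>

lemma erlang_bounds_square_root_staffing:
  "0 < lam \<Longrightarrow> 0 \<le> b \<Longrightarrow> erlang_bounds lam (lam + b * sqrt lam)"
  by unfold_locales auto

lemma UB_eq_inverse_lower_bound:
  assumes "0 < lam" "0 \<le> b"
  shows "UB b lam = inverse (erlang_bounds.lower_bound lam (lam + b * sqrt lam))"
proof -
  define n where "n = lam + b * sqrt lam"
  interpret erlang_bounds lam n
    unfolding n_def by (rule erlang_bounds_square_root_staffing[OF assms])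
  have a: "- 2 * n * (1 - rho + ln rho) = 2 * K"
    by (simp add: K_def psi_def algebra_simps)
  have phi: "std_phi (sqrt (2 * K)) = exp (- K) / sqrt (2 * pi)"
    using K_nonneg by (simp add: std_phi_def)
  have gamma: "(n - lam) / sqrt n = (1 - rho) * sqrt n"
    using n_pos by (simp add: rho_def field_simps real_sqrt_mult_self flip: real_sqrt_mult)
  have "(n - lam) / sqrt n * (std_Phi (sqrt (2 * K)) / std_phi (sqrt (2 * K)) + 2 / (3 * sqrt n))
      = C * sqrt (2 * pi) * std_Phi (sqrt (2 * K)) + (1 - rho) * (2/3)"
    unfolding gamma phi using n_pos by (simp add: C_def exp_minus field_simps)
  then show ?thesis
    unfolding UB_def Let_def n_def[symmetric] rho_def[symmetric] a by (simp add: lower_bound_def)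
qed

lemma alpha_tilde_le_UB:
  assumes "0 < lam" "0 \<le> b"
  shows "alpha_tilde b lam \<le> UB b lam"
proof -
  interpret erlang_bounds lam "lam + b * sqrt lam"
    by (rule erlang_bounds_square_root_staffing[OF assms])
  have "inverse (lam * (LBINT t:{0..}. erlang_integrand (lam + b * sqrt lam) lam t))
      \<le> inverse lower_bound"
    by (rule le_imp_inverse_le[OF lower_bound_le_integral lower_bound_pos])
  then show ?thesis
    unfolding alpha_tilde_eq UB_eq_inverse_lower_bound[OF assms] by (rule min.coboundedI2)
qed

lemma inverse_upper_bound_le_alpha_tilde:
  assumes "0 < lam" "0 \<le> b"
  shows "min 1 (inverse (erlang_bounds.upper_bound lam (lam + b * sqrt lam))) \<le> alpha_tilde b lam"
proof -
  interpret erlang_bounds lam "lam + b * sqrt lam"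
    by (rule erlang_bounds_square_root_staffing[OF assms])
  have "0 < lam * (LBINT t:{0..}. erlang_integrand (lam + b * sqrt lam) lam t)"
    using lower_bound_le_integral lower_bound_pos by linarith
  then have "inverse upper_bound
      \<le> inverse (lam * (LBINT t:{0..}. erlang_integrand (lam + b * sqrt lam) lam t))"
    by (rule le_imp_inverse_le[OF integral_le_upper_bound])
  then show ?thesis
    unfolding alpha_tilde_eq by (rule min.mono[OF order.refl])
qed

lemma alpha_tilde_antimono:
  assumes "0 < lam" "0 \<le> x" "x \<le> y"
  shows "alpha_tilde y lam \<le> alpha_tilde x lam"
proof -
  interpret x: erlang_bounds lam "lam + x * sqrt lam"
    using erlang_bounds_square_root_staffing assms by simp
  have "(LBINT t:{0..}. erlang_integrand (lam + x * sqrt lam) lam t)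
      \<le> (LBINT t:{0..}. erlang_integrand (lam + y * sqrt lam) lam t)"
    using assms
    by (intro set_integral_mono set_integrable_erlang_integrand erlang_integrand_mono
          add_pos_nonneg mult_right_mono) auto
  then have "lam * (LBINT t:{0..}. erlang_integrand (lam + x * sqrt lam) lam t)
      \<le> lam * (LBINT t:{0..}. erlang_integrand (lam + y * sqrt lam) lam t)"
    using assms(1) by simp
  moreover have "0 < lam * (LBINT t:{0..}. erlang_integrand (lam + x * sqrt lam) lam t)"
    using x.lower_bound_le_integral x.lower_bound_pos by linarith
  ultimately show ?thesis
    unfolding alpha_tilde_eq by (intro min.mono[OF order.refl] le_imp_inverse_le)
qed

definition alpha_HW :: "real \<Rightarrow> real" where
  "alpha_HW b = inverse (1 + sqrt (2 * pi) * b * std_Phi b * exp (b^2 / 2))"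

lemma alpha_HW_0: "alpha_HW 0 = 1"
  by (simp add: alpha_HW_def)

lemma inverse_alpha_HW_ge:
  assumes "0 \<le> b"
  shows "1 + b \<le> 1 + sqrt (2 * pi) * b * std_Phi b * exp (b^2 / 2)"
proof -
  have "2 \<le> sqrt (2 * pi)"
    using pi_gt3 real_sqrt_le_mono[of 4 "2 * pi"] by simp
  then have "2 * (1/2) \<le> sqrt (2 * pi) * std_Phi b"
    using std_Phi_ge_half[OF assms] by (intro mult_mono) auto
  then have "1 * 1 \<le> sqrt (2 * pi) * std_Phi b * exp (b^2 / 2)"
    by (intro mult_mono) auto
  from mult_left_mono[OF this assms] show ?thesis by (simp add: mult_ac)
qed

lemma alpha_HW_pos:
  assumes "0 \<le> b"
  shows "0 < alpha_HW b"
proof -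
  have "0 < 1 + sqrt (2 * pi) * b * std_Phi b * exp (b^2 / 2)"
    using inverse_alpha_HW_ge[OF assms] assms by linarith
  then show ?thesis by (simp add: alpha_HW_def)
qed

lemma alpha_HW_le: "0 \<le> b \<Longrightarrow> alpha_HW b \<le> inverse (1 + b)"
  unfolding alpha_HW_def by (intro le_imp_inverse_le inverse_alpha_HW_ge) auto

lemma alpha_HW_strict_antimono:
  assumes "0 \<le> x" "x < y"
  shows "alpha_HW y < alpha_HW x"
proof -
  have "x * std_Phi x * exp (x^2 / 2) < y * std_Phi y * exp (y^2 / 2)"
  proof (rule mult_less_le_imp_less)
    show "x * std_Phi x < y * std_Phi y"
      using assms std_Phi_mono[of x y] std_Phi_ge_half[of x]
      by (intro mult_less_le_imp_less) auto
    show "exp (x^2 / 2) \<le> exp (y^2 / 2)"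
      using assms by (simp add: power_mono)
  qed (use assms std_Phi_ge_half[of x] in auto)
  then show ?thesis
    unfolding alpha_HW_def using assms inverse_alpha_HW_ge[of x]
    by (intro less_imp_inverse_less) (auto simp: mult.assoc)
qed

lemma continuous_on_alpha_HW: "continuous_on {0..} alpha_HW"
proof (intro continuous_at_imp_continuous_on ballI)
  fix b :: real assume "b \<in> {0..}"
  then have "1 + sqrt (2 * pi) * b * std_Phi b * exp (b^2 / 2) \<noteq> 0"
    using inverse_alpha_HW_ge[of b] by auto
  then show "isCont alpha_HW b"
    unfolding alpha_HW_def[abs_def] by (intro continuous_intros isCont_std_Phi) auto
qed

lemma alpha_HW_eq_ex:
  assumes "0 < e" "e \<le> 1"
  shows "\<exists>b\<ge>0. alpha_HW b = e"
proof -
  have "alpha_HW (1/e) \<le> inverse (1 + 1/e)"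
    using alpha_HW_le[of "1/e"] assms by simp
  also have "\<dots> \<le> e"
    using assms by (simp add: field_simps)
  finally have "alpha_HW (1/e) \<le> e" .
  moreover have "continuous_on {0..1/e} alpha_HW"
    by (rule continuous_on_subset[OF continuous_on_alpha_HW]) auto
  ultimately have "\<exists>b. 0 \<le> b \<and> b \<le> 1/e \<and> alpha_HW b = e"
    using assms by (intro IVT2') (auto simp: alpha_HW_0)
  then show ?thesis by blast
qed

lemma erlang_bounds_tendsto:
  assumes "0 < b"
  shows lower_bound_tendsto:
      "((\<lambda>lam. erlang_bounds.lower_bound lam (lam + b * sqrt lam)) \<longlongrightarrow> inverse (alpha_HW b)) at_top"
    and upper_bound_tendsto:
      "((\<lambda>lam. erlang_bounds.upper_bound lam (lam + b * sqrt lam)) \<longlongrightarrow> inverse (alpha_HW b)) at_top"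
proof -
  define r where "r lam = lam / (lam + b * sqrt lam)" for lam :: real
  define c where "c lam = (1 - r lam) * sqrt (lam + b * sqrt lam)" for lam :: real
  define k where "k lam = (lam + b * sqrt lam) * (r lam - 1 - ln (r lam))" for lam :: real
  have r: "(r \<longlongrightarrow> 1) at_top" unfolding r_def using assms by real_asymp
  have c: "(c \<longlongrightarrow> b) at_top" unfolding c_def r_def using assms by real_asymp
  have "(k \<longlongrightarrow> b * b / 2) at_top" unfolding k_def r_def using assms by real_asymp
  then have k: "(k \<longlongrightarrow> b^2 / 2) at_top" by (simp add: power2_eq_square)
  have "((\<lambda>lam. sqrt (2 * k lam)) \<longlongrightarrow> sqrt (2 * (b^2 / 2))) at_top"
    by (intro tendsto_intros k)
  then have "((\<lambda>lam. sqrt (2 * k lam)) \<longlongrightarrow> b) at_top"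
    using assms by simp
  then have Phi: "((\<lambda>lam. std_Phi (sqrt (2 * k lam))) \<longlongrightarrow> std_Phi b) at_top"
    by (rule isCont_tendsto_compose[OF isCont_std_Phi])
  have inv: "inverse (alpha_HW b) = 1 + b * exp (b^2 / 2) * sqrt (2 * pi) * std_Phi b + (1 - 1) * x"
    for x :: real
    by (simp add: alpha_HW_def mult_ac)
  define g where "g lam = r lam + c lam * exp (k lam) * sqrt (2 * pi) * std_Phi (sqrt (2 * k lam))"
    for lam
  have lim: "((\<lambda>lam. g lam + (1 - r lam) * x lam) \<longlongrightarrow> inverse (alpha_HW b)) at_top"
    if "(x \<longlongrightarrow> l) at_top" for x l
    unfolding inv[of l] g_def by (intro tendsto_intros r c k Phi that)
  have "eventually (\<lambda>lam. g lam + (1 - r lam) * (2/3) = erlang_bounds.lower_bound lam (lam + b * sqrt lam)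
      \<and> g lam + (1 - r lam) * exp (k lam) = erlang_bounds.upper_bound lam (lam + b * sqrt lam)) at_top"
    using eventually_gt_at_top[of 0]
  proof eventually_elim
    case (elim lam)
    interpret erlang_bounds lam "lam + b * sqrt lam"
      using erlang_bounds_square_root_staffing elim assms by simp
    show ?case
      by (simp add: lower_bound_def upper_bound_def rho_def C_def K_def psi_def g_def r_def c_def k_def)
  qed
  then have ev_lower: "eventually (\<lambda>lam.
        g lam + (1 - r lam) * (2/3) = erlang_bounds.lower_bound lam (lam + b * sqrt lam)) at_top"
    and ev_upper: "eventually (\<lambda>lam.
        g lam + (1 - r lam) * exp (k lam) = erlang_bounds.upper_bound lam (lam + b * sqrt lam)) at_top"
    by (auto elim: eventually_mono)
  show "((\<lambda>lam. erlang_bounds.lower_bound lam (lam + b * sqrt lam)) \<longlongrightarrow> inverse (alpha_HW b)) at_top"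
    by (rule Lim_transform_eventually[OF lim[OF tendsto_const] ev_lower])
  show "((\<lambda>lam. erlang_bounds.upper_bound lam (lam + b * sqrt lam)) \<longlongrightarrow> inverse (alpha_HW b)) at_top"
    by (rule Lim_transform_eventually[OF lim[OF tendsto_exp[OF k]] ev_upper])
qed

lemma UB_tendsto_alpha_HW:
  assumes "0 < b"
  shows "((\<lambda>lam. UB b lam) \<longlongrightarrow> alpha_HW b) at_top"
proof -
  have "((\<lambda>lam. inverse (erlang_bounds.lower_bound lam (lam + b * sqrt lam))) \<longlongrightarrow> alpha_HW b) at_top"
    using tendsto_inverse[OF lower_bound_tendsto[OF assms]] alpha_HW_pos[of b] assms by simp
  moreover have "eventually (\<lambda>lam. inverse (erlang_bounds.lower_bound lam (lam + b * sqrt lam)) = UB b lam) at_top"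
    using eventually_gt_at_top[of 0] by eventually_elim (simp add: UB_eq_inverse_lower_bound assms less_imp_le)
  ultimately show ?thesis by (rule Lim_transform_eventually)
qed

lemma alpha_tilde_tendsto_alpha_HW:
  assumes "0 < b"
  shows "((\<lambda>lam. alpha_tilde b lam) \<longlongrightarrow> alpha_HW b) at_top"
proof (rule tendsto_sandwich)
  have "inverse (1 + b) \<le> 1" using assms by (simp add: inverse_le_1_iff)
  then have "alpha_HW b \<le> 1" using alpha_HW_le[of b] assms by linarith
  then show "((\<lambda>lam. min 1 (inverse (erlang_bounds.upper_bound lam (lam + b * sqrt lam))))
      \<longlongrightarrow> alpha_HW b) at_top"
    using tendsto_min[OF tendsto_const[of 1] tendsto_inverse[OF upper_bound_tendsto[OF assms]]]
      alpha_HW_pos[of b] assms by (simp add: min_absorb2)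
  show "eventually (\<lambda>lam. min 1 (inverse (erlang_bounds.upper_bound lam (lam + b * sqrt lam)))
      \<le> alpha_tilde b lam) at_top"
    using eventually_gt_at_top[of 0]
    by eventually_elim (rule inverse_upper_bound_le_alpha_tilde, use assms in auto)
  show "eventually (\<lambda>lam. alpha_tilde b lam \<le> UB b lam) at_top"
    using eventually_gt_at_top[of 0]
    by eventually_elim (rule alpha_tilde_le_UB, use assms in auto)
qed (rule UB_tendsto_alpha_HW[OF assms])

section \<open>Optimal staffing levels\<close>

lemma minimizer_le:
  fixes c :: "real \<Rightarrow> real"
  assumes "strict_mono_on {0..} c" "0 \<le> beta" "\<forall>x\<ge>0. P x \<longrightarrow> c beta \<le> c x" "0 \<le> b" "P b"
  shows "beta \<le> b"
proof -
  have "c beta \<le> c b" using assms(3-5) by blast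
  then show ?thesis using strict_mono_on_less_eq[OF assms(1), of beta b] assms(2,4) by simp
qed

lemma tendsto_squeeze:
  fixes f g :: "'a \<Rightarrow> real"
  assumes "\<And>b. b < s \<Longrightarrow> eventually (\<lambda>x. b < f x) F"
    and "\<And>b. s < b \<Longrightarrow> eventually (\<lambda>x. g x < b) F"
    and le: "eventually (\<lambda>x. f x \<le> g x) F"
  shows "(f \<longlongrightarrow> s) F" "(g \<longlongrightarrow> s) F"
proof -
  have "eventually (\<lambda>x. f x < b) F" if "s < b" for b
    using assms(2)[OF that] le by eventually_elim simp
  with assms(1) show "(f \<longlongrightarrow> s) F" by (rule order_tendstoI)
  have "eventually (\<lambda>x. b < g x) F" if "b < s" for b
    using assms(1)[OF that] le by eventually_elim simp
  from this assms(2) show "(g \<longlongrightarrow> s) F" by (rule order_tendstoI)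
qed

lemma eventually_minimizer_le:
  fixes g :: "real \<Rightarrow> real \<Rightarrow> real" and c :: "real \<Rightarrow> real"
  assumes "strict_mono_on {0..} c" "0 \<le> b"
    and "((\<lambda>lam. g b lam) \<longlongrightarrow> l) at_top" "(eps \<longlongrightarrow> e) at_top" "l < e"
    and opt: "\<And>lam. 0 < lam \<Longrightarrow> 0 \<le> beta lam \<and> (\<forall>x\<ge>0. g x lam \<le> eps lam \<longrightarrow> c (beta lam) \<le> c x)"
  shows "eventually (\<lambda>lam. beta lam \<le> b) at_top"
proof -
  define m where "m = (l + e) / 2"
  have "eventually (\<lambda>lam. g b lam < m) at_top" "eventually (\<lambda>lam. m < eps lam) at_top"
    using order_tendstoD(2)[OF assms(3), of m] order_tendstoD(1)[OF assms(4), of m] assms(5)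
    by (auto simp: m_def)
  with eventually_gt_at_top[of 0] show ?thesis
  proof eventually_elim
    case (elim lam)
    then have "g b lam \<le> eps lam" by linarith
    with opt[OF \<open>0 < lam\<close>] show ?case
      using minimizer_le[OF assms(1) _ _ assms(2), of "beta lam" "\<lambda>x. g x lam \<le> eps lam"] by blast
  qed
qed

lemma eventually_le_feasible:
  fixes g :: "real \<Rightarrow> real \<Rightarrow> real"
  assumes "0 \<le> b"
    and "((\<lambda>lam. g b lam) \<longlongrightarrow> l) at_top" "(eps \<longlongrightarrow> e) at_top" "e < l"
    and antimono: "\<And>lam x y. 0 < lam \<Longrightarrow> 0 \<le> x \<Longrightarrow> x \<le> y \<Longrightarrow> g y lam \<le> g x lam"
    and feasible: "\<And>lam. 0 < lam \<Longrightarrow> 0 \<le> beta lam \<and> g (beta lam) lam \<le> eps lam"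
  shows "eventually (\<lambda>lam. b \<le> beta lam) at_top"
proof -
  define m where "m = (l + e) / 2"
  have "eventually (\<lambda>lam. m < g b lam) at_top" "eventually (\<lambda>lam. eps lam < m) at_top"
    using order_tendstoD(1)[OF assms(2), of m] order_tendstoD(2)[OF assms(3), of m] assms(4)
    by (auto simp: m_def)
  with eventually_gt_at_top[of 0] show ?thesis
  proof eventually_elim
    case (elim lam)
    show ?case
    proof (rule ccontr)
      assume "\<not> b \<le> beta lam"
      then have "g b lam \<le> g (beta lam) lam"
        using antimono[of lam "beta lam" b] feasible[of lam] elim by auto
      then have "g b lam \<le> eps lam"
        using feasible[of lam] elim by auto
      then show False using elim by linarith
    qed
  qed
qed

theorem lemma8:
  fixes c :: "real \<Rightarrow> real" and eps :: "real \<Rightarrow> real" and e :: real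
    and betaF betaG :: "real \<Rightarrow> real"
  assumes c_cont: "continuous_on {0..} c"
    and c_mono: "strict_mono_on {0..} c"
    and eps_range: "\<And>lam. lam > 0 \<Longrightarrow> 0 < eps lam \<and> eps lam \<le> 1"
    and eps_lim: "(eps \<longlongrightarrow> e) at_top"
    and e_range: "0 < e" "e < 1"
    and F_opt: "\<And>lam. lam > 0 \<Longrightarrow>
        betaF lam \<ge> 0 \<and> alpha_tilde (betaF lam) lam \<le> eps lam \<and>
        (\<forall>\<beta>\<ge>0. alpha_tilde \<beta> lam \<le> eps lam \<longrightarrow> c (betaF lam) \<le> c \<beta>)"
    and G_opt: "\<And>lam. lam > 0 \<Longrightarrow>
        betaG lam \<ge> 0 \<and> UB (betaG lam) lam \<le> eps lam \<and>
        (\<forall>\<beta>\<ge>0. UB \<beta> lam \<le> eps lam \<longrightarrow> c (betaG lam) \<le> c \<beta>)"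
  shows "(\<forall>lam>0. betaG lam \<ge> betaF lam) \<and>
         (\<exists>\<beta>s::real. (betaG \<longlongrightarrow> \<beta>s) at_top \<and> (betaF \<longlongrightarrow> \<beta>s) at_top)"
  \<comment> \<open>the minimizers are assumed to exist\<close>
proof -
  have F_le_G: "betaF lam \<le> betaG lam" if "0 < lam" for lam
  proof -
    have "alpha_tilde (betaG lam) lam \<le> eps lam"
      using alpha_tilde_le_UB[OF that, of "betaG lam"] G_opt[OF that] by linarith
    with F_opt[OF that] G_opt[OF that] show ?thesis
      using minimizer_le[OF c_mono, of "betaF lam" "\<lambda>b. alpha_tilde b lam \<le> eps lam"] by blast
  qed
  obtain bs where bs: "0 \<le> bs" "alpha_HW bs = e"
    using alpha_HW_eq_ex e_range by fastforce
  have G_upper: "eventually (\<lambda>lam. betaG lam < b) at_top" if "bs < b" for b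
  proof -
    define m where "m = (bs + b) / 2"
    have m: "0 < m" "m < b" "alpha_HW m < e"
      using bs that alpha_HW_strict_antimono[of bs m] by (auto simp: m_def)
    have "eventually (\<lambda>lam. betaG lam \<le> m) at_top"
      by (rule eventually_minimizer_le[where g=UB and b=m, OF c_mono _ UB_tendsto_alpha_HW[OF m(1)] eps_lim m(3)])
         (use m(1) G_opt in auto)
    then show ?thesis by eventually_elim (use m(2) in simp)
  qed
  have F_lower: "eventually (\<lambda>lam. b < betaF lam) at_top" if "b < bs" for b
  proof (cases "b < 0")
    case True
    show ?thesis
      using eventually_gt_at_top[of 0] by eventually_elim (use True F_opt in fastforce)
  next
    case False
    define m where "m = (b + bs) / 2"
    have m: "0 < m" "b < m" "e < alpha_HW m"
      using bs that False alpha_HW_strict_antimono[of m bs] by (auto simp: m_def)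
    have "eventually (\<lambda>lam. m \<le> betaF lam) at_top"
      by (rule eventually_le_feasible[where g=alpha_tilde and b=m, OF _ alpha_tilde_tendsto_alpha_HW[OF m(1)] eps_lim m(3)])
         (use m(1) F_opt alpha_tilde_antimono in auto)
    then show ?thesis by eventually_elim (use m(2) in simp)
  qed
  have "eventually (\<lambda>lam. betaF lam \<le> betaG lam) at_top"
    using eventually_gt_at_top[of 0] by eventually_elim (rule F_le_G)
  from tendsto_squeeze[OF F_lower G_upper this] F_le_G show ?thesis by auto
qed

end
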